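(* Let $p,q\geq 2$ be relatively prime integers. For every $c\in A_{pq}^{\mathbb{Z}}$ and all $k,i\in\mathbb{Z}$, the value $F_{p,q}^k(c)(i)$ is uniquely determined by the three values $F_{p,q}^{k-1}(c)(i+1)$, $F_{p,q}^{k}(c)(i+1)$ and $F_{p,q}^{k+1}(c)(i+1)$; that is, if $c,c'\in A_{pq}^{\mathbb{Z}}$ satisfy $F_{p,q}^{m}(c)(i+1)=F_{p,q}^{m}(c')(i+1)$ for $m\in\{k-1,k,k+1\}$, then $F_{p,q}^k(c)(i)=F_{p,q}^k(c')(i)$.
   Context: For an integer $n>1$, $A_n=\{0,1,\dots,n-1\}$. For relatively prime integers $p,q\geq2$ define $g_{p,q}:A_{pq}\times A_{pq}\to A_{pq}$ by writing $x=x_1q+x_0$, $y=y_1q+y_0$ with $x_0,y_0\in A_q$, $x_1,y_1\in A_p$ (uniquely), and setting $g_{p,q}(x,y)=x_0p+y_1$. Define $F_{p,q}:A_{pq}^{\mathbb{Z}}\to A_{pq}^{\mathbb{Z}}$ by $F_{p,q}(c)(i)=g_{p,q}\big(g_{p,q}(c(i-1),c(i)),\,g_{p,q}(c(i),c(i+1))\big)$. The map $F_{p,q}$ is a bijection whose inverse is $F_{q,p}$ (defined by the same formulas with the roles of $p$ and $q$ exchanged); $F_{p,q}^k$ for negative $k$ denotes iterates of the inverse. *)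

theory Defs
  imports Main
begin

text \<open>Local rule g_{p,q} on A_{pq} = {0..<p*q}: write x = x1*q + x0, y = y1*q + y0
  with x0,y0 < q, x1,y1 < p; then g(x,y) = x0*p + y1.\<close>
definition g :: "nat \<Rightarrow> nat \<Rightarrow> nat \<Rightarrow> nat \<Rightarrow> nat" where
  "g p q x y = (x mod q) * p + y div q"

definition F :: "nat \<Rightarrow> nat \<Rightarrow> (int \<Rightarrow> nat) \<Rightarrow> (int \<Rightarrow> nat)" where
  "F p q c = (\<lambda>i. g p q (g p q (c (i - 1)) (c i)) (g p q (c i) (c (i + 1))))"

text \<open>Integer iterates: F^k for k >= 0, and iterates of the inverse F_{q,p} for k < 0.\<close>
definition Fpow :: "nat \<Rightarrow> nat \<Rightarrow> int \<Rightarrow> (int \<Rightarrow> nat) \<Rightarrow> (int \<Rightarrow> nat)" where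
  "Fpow p q k c = (if 0 \<le> k then (F p q ^^ nat k) c else (F q p ^^ nat (- k)) c)"

end

theory Submission
  imports Defs "HOL-Number_Theory.Number_Theory"
begin

(* Put u(i) = g(x(i), x(i+1)) for a configuration x with values below pq. Then
   u(i) mod p = x(i+1) div q, u(i) div p = x(i) mod q and F(x)(i+1) div p = u(i) mod q.
   So x(i+1) and F(x)(i+1) give both residues of u(i), hence u(i) by the Chinese remainder
   theorem, hence x(i) mod q. The same identities show that F_{q,p} inverts F_{p,q}, so the
   three given values are y(i+1), F_{p,q}(y)(i+1) and F_{q,p}(y)(i+1) for y = F^k(c): the
   first two determine y(i) mod q, the first and third y(i) mod p. *)

lemma eq_if_mod_eq_coprime:
  fixes a b p q :: nat
  assumes "coprime p q" "a < p * q" "b < p * q" "a mod p = b mod p" "a mod q = b mod q"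
  shows "a = b"
proof -
  have "[a = b] (mod p * q)"
    using assms coprime_cong_mult_nat[of a b p q] by (simp add: cong_def)
  then show ?thesis
    using assms cong_less_modulus_unique_nat by blast
qed

lemma g_mod: "y < p * q \<Longrightarrow> g p q x y mod p = y div q"
  unfolding g_def by (simp add: less_mult_imp_div_less)

lemma g_div: "y < p * q \<Longrightarrow> g p q x y div p = x mod q"
  unfolding g_def using less_mult_imp_div_less[of y p q] by simp

lemma g_less: "y < p * q \<Longrightarrow> g p q x y < p * q"
proof -
  assume y: "y < p * q"
  then have "0 < p" "0 < q"
    by (cases "p = 0"; cases "q = 0"; simp)+
  moreover have "g p q x y div p < q"
    using y \<open>0 < q\<close> by (simp add: g_div)
  ultimately show ?thesis
    by (simp add: div_less_iff_less_mult mult.commute)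
qed

lemma g_swap_g_cancel: "b < p * q \<Longrightarrow> c < p * q \<Longrightarrow> g q p (g p q a b) (g p q b c) = b"
  unfolding g_def[of q p] by (simp add: g_mod g_div)

lemma F_less: "\<forall>j. x j < p * q \<Longrightarrow> F p q x i < p * q"
  unfolding F_def by (simp add: g_less)

lemma funpow_F_less: "\<forall>j. x j < p * q \<Longrightarrow> (F p q ^^ n) x i < p * q"
  by (induction n arbitrary: i) (simp_all add: F_less)

lemma Fpow_less:
  assumes "\<forall>j. c j < p * q"
  shows "Fpow p q k c i < p * q"
  using assms funpow_F_less[of c p q] funpow_F_less[of c q p]
  by (simp add: Fpow_def mult.commute)

lemma F_swap_F_cancel:
  assumes "\<forall>j. x j < p * q"
  shows "F q p (F p q x) = x"
proof
  fix i
  define u where "u j = g p q (x j) (x (j + 1))" for j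
  have u_less: "u j < p * q" for j
    using assms by (simp add: u_def g_less)
  have F_u: "F p q x j = g p q (u (j - 1)) (u j)" for j
    by (simp add: F_def u_def)
  have v: "g q p (F p q x j) (F p q x (j + 1)) = u j" for j
    using u_less by (simp add: F_u g_swap_g_cancel)
  have "F q p (F p q x) i = g q p (u (i - 1)) (u i)"
    unfolding F_def[of q p "F p q x"] using v[of "i - 1"] v[of i] by simp
  also have "\<dots> = x i"
    using assms by (simp add: u_def g_swap_g_cancel)
  finally show "F q p (F p q x) i = x i" .
qed

lemma Fpow_succ:
  assumes "\<forall>j. c j < p * q"
  shows "Fpow p q (k + 1) c = F p q (Fpow p q k c)"
proof (cases "0 \<le> k")
  case True
  then have "nat (k + 1) = Suc (nat k)"
    by simp
  with True show ?thesis
    by (simp add: Fpow_def)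
next
  case False
  define n where "n = nat (- (k + 1))"
  have "nat (- k) = Suc n"
    using False by (simp add: n_def)
  moreover have "\<forall>j. (F q p ^^ n) c j < q * p"
    using assms funpow_F_less[of c q p] by (simp add: mult.commute)
  ultimately show ?thesis
    using False by (simp add: Fpow_def n_def F_swap_F_cancel)
qed

lemma Fpow_pred:
  assumes "\<forall>j. c j < p * q"
  shows "Fpow p q (k - 1) c = F q p (Fpow p q k c)"
proof -
  have "Fpow p q k c = F p q (Fpow p q (k - 1) c)"
    using Fpow_succ[OF assms, of "k - 1"] by simp
  then show ?thesis
    using assms by (simp add: F_swap_F_cancel Fpow_less)
qed

lemma F_determines_left_mod:
  assumes "coprime p q" "\<forall>j. x j < p * q" "\<forall>j. x' j < p * q"
    and "x (i + 1) = x' (i + 1)" "F p q x (i + 1) = F p q x' (i + 1)"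
  shows "x i mod q = x' i mod q"
proof -
  have F_div: "F p q z (i + 1) div p = g p q (z i) (z (i + 1)) mod q"
    if "\<forall>j. z j < p * q" for z
    using that by (simp add: F_def g_div g_less)
  have "g p q (x i) (x (i + 1)) = g p q (x' i) (x' (i + 1))"
  proof (rule eq_if_mod_eq_coprime[OF \<open>coprime p q\<close>])
    show "g p q (x i) (x (i + 1)) mod p = g p q (x' i) (x' (i + 1)) mod p"
      using assms by (simp add: g_mod)
    show "g p q (x i) (x (i + 1)) mod q = g p q (x' i) (x' (i + 1)) mod q"
      using assms F_div by metis
  qed (use assms in \<open>simp_all add: g_less\<close>)
  then show ?thesis
    using assms by (metis g_div)
qed

theorem proposition1:
  fixes p q :: nat and c c' :: "int \<Rightarrow> nat" and k i :: int
  assumes "p \<ge> 2" and "q \<ge> 2" and "coprime p q"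
    and "\<forall>j. c j < p * q" and "\<forall>j. c' j < p * q"
    and "\<forall>m \<in> {k - 1, k, k + 1}. Fpow p q m c (i + 1) = Fpow p q m c' (i + 1)"
  shows "Fpow p q k c i = Fpow p q k c' i"
proof -
  define y y' where "y = Fpow p q k c" and "y' = Fpow p q k c'"
  have y_less: "\<forall>j. y j < p * q" "\<forall>j. y' j < p * q"
    using assms(4,5) by (simp_all add: y_def y'_def Fpow_less)
  then have y_less_swap: "\<forall>j. y j < q * p" "\<forall>j. y' j < q * p"
    by (simp_all add: mult.commute)
  have "y (i + 1) = y' (i + 1)"
    and "F p q y (i + 1) = F p q y' (i + 1)"
    and "F q p y (i + 1) = F q p y' (i + 1)"
    using assms(4-6) by (simp_all add: y_def y'_def Fpow_succ Fpow_pred)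
  then have "y i mod q = y' i mod q" and "y i mod p = y' i mod p"
    using F_determines_left_mod assms(3) y_less y_less_swap
    by (metis coprime_commute)+
  then show ?thesis
    using eq_if_mod_eq_coprime[OF assms(3)] y_less by (simp add: y_def y'_def)
qed

end
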